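(* Let $(N_0,v)$ be the RS-game corresponding to an RS-situation $(N_0,c,w,P)$, and let $\xi(v)$ be defined by $\xi_0(v)=n\beta$ and $\xi_i(v)=v(\{0,i\})-\beta$ for $i\in N$, where $\beta=\min_{S\subseteq N,\,S\neq\emptyset}\frac{v(S_0)-v(S)}{s}$. Then $\xi(v)\in Core(N_0,v)$ and $\xi_0(v)>0$.
   Context: Let $c\in\mathbb{R}$. An RS-problem is a triple $(c,w,p)$ where $w:\mathbb{R}_+\to(c,+\infty)$ is decreasing (non-increasing) and continuous, and $p:\mathbb{R}_+\to\mathbb{R}$ is decreasing (non-increasing) and continuous, satisfies $p(0)>w(0)$, and there exists $q>0$ with $p(q)=c$. An RS-situation is a tuple $(N_0,c,w,P)$ where $N=\{1,\dots,n\}$ is the set of retailers, $0$ denotes the supplier, $N_0=N\cup\{0\}$, $P=(p_1,\dots,p_n)$, and $(c,w,p_i)$ is an RS-problem for each $i\in N$. For $S\subseteq N$ write $S_0=S\cup\{0\}$ and $s=|S|$. For $q\ge0$ and $\omega\in\mathbb{R}$, $\Pi_i^{ret}(q;\omega)=(p_i(q)-\omega)q$. For nonempty $S\subseteq N$, $(q_i^S)_{i\in S}$ is a fixed optimal solution of: maximize $\sum_{i\in S}(p_i(q_i)-w(q_S))q_i$ over $q\in\mathbb{R}_+^{S}$ subject to $p_i(q_i)\ge w(q_S)$ for all $i\in S$, where $q_S=\sum_{i\in S}q_i$; $q_S^S=\sum_{i\in S}q_i^S$. For $i\in N$, $q_i^c$ is a fixed optimal solution of: maximize $(p_i(q)-c)q$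 over $q\ge0$ subject to $p_i(q)\ge c$. The corresponding RS-game $(N_0,v)$ is the TU game on $N_0$ with $v(\emptyset)=0$ and, for all $S\subseteq N$, $v(S)=\sum_{i\in S}\Pi_i^{ret}(q_i^S;w(q_S^S))$ and $v(S_0)=\sum_{i\in S}\Pi_i^{ret}(q_i^c;c)$. The core is $Core(N_0,v)=\{x\in\mathbb{R}^{N_0}: \sum_{i\in N_0}x_i=v(N_0),\ \sum_{i\in T}x_i\ge v(T)\text{ for all }T\subset N_0\}$. *)

theory Defs
  imports Complex_Main
begin

text \<open>Players are natural numbers: 0 is the supplier, retailers are 1..n.
  Functions on R+ are real functions; only their values on [0,\<infinity>) matter.\<close>

definition nonincr_on_nonneg :: "(real \<Rightarrow> real) \<Rightarrow> bool" where
  "nonincr_on_nonneg f \<longleftrightarrow> (\<forall>x y. 0 \<le> x \<longrightarrow> x \<le> y \<longrightarrow> f y \<le> f x)"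

definition rs_problem :: "real \<Rightarrow> (real \<Rightarrow> real) \<Rightarrow> (real \<Rightarrow> real) \<Rightarrow> bool" where
  "rs_problem c w p \<longleftrightarrow>
     (\<forall>q\<ge>0. w q > c) \<and> nonincr_on_nonneg w \<and> continuous_on {0..} w \<and>
     nonincr_on_nonneg p \<and> continuous_on {0..} p \<and> p 0 > w 0 \<and>
     (\<exists>q>0. p q = c)"

definition rs_situation :: "nat \<Rightarrow> real \<Rightarrow> (real \<Rightarrow> real) \<Rightarrow> (nat \<Rightarrow> real \<Rightarrow> real) \<Rightarrow> bool" where
  "rs_situation n c w P \<longleftrightarrow> (\<forall>i\<in>{1..n}. rs_problem c w (P i))"

definition ret_profit :: "(nat \<Rightarrow> real \<Rightarrow> real) \<Rightarrow> nat \<Rightarrow> real \<Rightarrow> real \<Rightarrow> real" where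
  "ret_profit P i q \<omega> = (P i q - \<omega>) * q"

definition coal_feasible :: "(real \<Rightarrow> real) \<Rightarrow> (nat \<Rightarrow> real \<Rightarrow> real) \<Rightarrow> nat set \<Rightarrow> (nat \<Rightarrow> real) \<Rightarrow> bool" where
  "coal_feasible w P S q \<longleftrightarrow> (\<forall>i\<in>S. 0 \<le> q i \<and> P i (q i) \<ge> w (\<Sum>j\<in>S. q j))"

definition coal_obj :: "(real \<Rightarrow> real) \<Rightarrow> (nat \<Rightarrow> real \<Rightarrow> real) \<Rightarrow> nat set \<Rightarrow> (nat \<Rightarrow> real) \<Rightarrow> real" where
  "coal_obj w P S q = (\<Sum>i\<in>S. (P i (q i) - w (\<Sum>j\<in>S. q j)) * q i)"

definition coal_optimal :: "(real \<Rightarrow> real) \<Rightarrow> (nat \<Rightarrow> real \<Rightarrow> real) \<Rightarrow> nat set \<Rightarrow> (nat \<Rightarrow> real) \<Rightarrow> bool" where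
  "coal_optimal w P S q \<longleftrightarrow> coal_feasible w P S q \<and>
     (\<forall>q'. coal_feasible w P S q' \<longrightarrow> coal_obj w P S q' \<le> coal_obj w P S q)"

definition single_optimal :: "real \<Rightarrow> (real \<Rightarrow> real) \<Rightarrow> real \<Rightarrow> bool" where
  "single_optimal c p x \<longleftrightarrow> 0 \<le> x \<and> p x \<ge> c \<and>
     (\<forall>y. 0 \<le> y \<longrightarrow> p y \<ge> c \<longrightarrow> (p y - c) * y \<le> (p x - c) * x)"

text \<open>The RS-game. qS S i = q_i^S, qc i = q_i^c. A coalition T \<subseteq> {0..n} is either
  S (0 \<notin> T) or S_0 = S \<union> {0}.\<close>
definition rs_game :: "real \<Rightarrow> (real \<Rightarrow> real) \<Rightarrow> (nat \<Rightarrow> real \<Rightarrow> real) \<Rightarrow>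
    (nat set \<Rightarrow> nat \<Rightarrow> real) \<Rightarrow> (nat \<Rightarrow> real) \<Rightarrow> nat set \<Rightarrow> real" where
  "rs_game c w P qS qc T =
     (if 0 \<in> T then (\<Sum>i\<in>T - {0}. ret_profit P i (qc i) c)
      else (\<Sum>i\<in>T. ret_profit P i (qS T i) (w (\<Sum>j\<in>T. qS T j))))"

definition core :: "nat set \<Rightarrow> (nat set \<Rightarrow> real) \<Rightarrow> (nat \<Rightarrow> real) set" where
  "core N0 v = {x. (\<Sum>i\<in>N0. x i) = v N0 \<and> (\<forall>T. T \<subset> N0 \<longrightarrow> (\<Sum>i\<in>T. x i) \<ge> v T)}"

definition rs_beta :: "nat \<Rightarrow> (nat set \<Rightarrow> real) \<Rightarrow> real" where
  "rs_beta n v = Min {(v (insert 0 S) - v S) / real (card S) | S. S \<subseteq> {1..n} \<and> S \<noteq> {}}"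

definition rs_xi :: "nat \<Rightarrow> (nat set \<Rightarrow> real) \<Rightarrow> nat \<Rightarrow> real" where
  "rs_xi n v i = (if i = 0 then real n * rs_beta n v else v {0, i} - rs_beta n v)"

end

theory Submission
  imports Defs
begin

text \<open>Every retailer makes a positive profit when it buys at cost \<open>c\<close> and sells at its optimal
  quantity, and any feasible plan of a coalition without the supplier pays a wholesale price
  \<open>w(q) > c\<close>. Hence every nonempty \<open>S\<close> gains strictly by adding the supplier, so
  \<open>\<beta> > 0\<close> and \<open>\<xi>\<^sub>0 = n\<beta> > 0\<close>. Since \<open>v(S\<^sub>0)\<close> is additive in the retailers, the
  payoff of \<open>S\<^sub>0\<close> under \<open>\<xi>\<close> exceeds \<open>v(S\<^sub>0)\<close> by \<open>(n - s)\<beta> \<ge> 0\<close>, with equality for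
  the grand coalition, and the payoff of \<open>S\<close> is \<open>v(S\<^sub>0) - s\<beta> \<ge> v(S)\<close> by minimality of \<open>\<beta>\<close>.\<close>

lemma single_optimal_profit_pos:
  assumes "continuous_on {0..} p" and "c < p 0" and "single_optimal c p x"
  shows "0 < (p x - c) * x"
proof -
  have "(p \<longlongrightarrow> p 0) (at 0 within {0..})"
    using assms(1) by (simp add: continuous_on_def)
  then have "(p \<longlongrightarrow> p 0) (at_right 0)"
    by (simp add: at_within_Ici_at_right)
  then have "\<forall>\<^sub>F y in at_right 0. c < p y"
    using assms(2) by (rule order_tendstoD(1))
  then obtain b where "0 < b" and above_c: "\<And>y. 0 < y \<Longrightarrow> y < b \<Longrightarrow> c < p y"
    by (auto simp: eventually_at_right_field)
  define y where "y = b / 2"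
  have "0 < y" "c < p y"
    using \<open>0 < b\<close> above_c by (simp_all add: y_def)
  then have "0 < (p y - c) * y"
    by simp
  also have "\<dots> \<le> (p x - c) * x"
    using assms(3) \<open>0 < y\<close> \<open>c < p y\<close> unfolding single_optimal_def by simp
  finally show ?thesis .
qed

lemma profit_at_higher_price_lt_single_optimal:
  assumes "single_optimal c p x" and "0 < (p x - c) * x"
    and "c < W" and "0 \<le> y" and "W \<le> p y"
  shows "(p y - W) * y < (p x - c) * x"
proof (cases "y = 0")
  case True
  then show ?thesis using assms(2) by simp
next
  case False
  then have "(p y - W) * y < (p y - c) * y"
    using assms(3,4) by simp
  also have "\<dots> \<le> (p x - c) * x"
    using assms(1,3-5) unfolding single_optimal_def by simp
  finally show ?thesis .
qed

lemma coal_obj_lt_sum_single_optimal: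
  assumes "finite S" and "S \<noteq> {}" and "coal_feasible w P S q"
    and "c < w (\<Sum>j\<in>S. q j)"
    and "\<And>i. i \<in> S \<Longrightarrow> single_optimal c (P i) (x i)"
    and "\<And>i. i \<in> S \<Longrightarrow> 0 < (P i (x i) - c) * x i"
  shows "coal_obj w P S q < (\<Sum>i\<in>S. (P i (x i) - c) * x i)"
  unfolding coal_obj_def
proof (rule sum_strict_mono[OF assms(1,2)])
  fix i assume "i \<in> S"
  then show "(P i (q i) - w (\<Sum>j\<in>S. q j)) * q i < (P i (x i) - c) * x i"
    using assms(3-6) unfolding coal_feasible_def
    by (blast intro: profit_at_higher_price_lt_single_optimal)
qed

lemma rs_game_insert_supplier:
  assumes "0 \<notin> S"
  shows "rs_game c w P qS qc (insert 0 S) = (\<Sum>i\<in>S. ret_profit P i (qc i) c)"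
  using assms by (simp add: rs_game_def)

lemma rs_game_without_supplier:
  assumes "0 \<notin> S"
  shows "rs_game c w P qS qc S = coal_obj w P S (qS S)"
  using assms by (simp add: rs_game_def coal_obj_def ret_profit_def)

lemma rs_game_supplier_gain:
  assumes "rs_situation n c w P"
    and "coal_optimal w P S (qS S)"
    and "\<And>i. i \<in> {1..n} \<Longrightarrow> single_optimal c (P i) (qc i)"
    and "S \<subseteq> {1..n}" and "S \<noteq> {}"
  shows "rs_game c w P qS qc S < rs_game c w P qS qc (insert 0 S)"
proof -
  have no_supplier: "0 \<notin> S" and "finite S"
    using assms(4) finite_subset by auto
  have feasible: "coal_feasible w P S (qS S)"
    using assms(2) unfolding coal_optimal_def by simp
  obtain i where "i \<in> S" using assms(5) by blast
  then have "rs_problem c w (P i)"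
    using assms(1,4) unfolding rs_situation_def by blast
  moreover have "0 \<le> (\<Sum>j\<in>S. qS S j)"
    using feasible unfolding coal_feasible_def by (simp add: sum_nonneg)
  ultimately have price_above_cost: "c < w (\<Sum>j\<in>S. qS S j)"
    unfolding rs_problem_def by blast
  have "\<And>i. i \<in> S \<Longrightarrow> 0 < (P i (qc i) - c) * qc i"
    using assms(1,3,4) unfolding rs_situation_def rs_problem_def
    by (force intro: single_optimal_profit_pos)
  then have "coal_obj w P S (qS S) < (\<Sum>i\<in>S. (P i (qc i) - c) * qc i)"
    using \<open>finite S\<close> assms(3-5) feasible price_above_cost
    by (intro coal_obj_lt_sum_single_optimal) auto
  then show ?thesis
    using no_supplier
    by (simp add: rs_game_without_supplier rs_game_insert_supplier ret_profit_def)
qed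

lemma finite_rs_beta_candidates:
  fixes v :: "nat set \<Rightarrow> real" and n :: nat
  shows "finite {(v (insert 0 S) - v S) / real (card S) | S. S \<subseteq> {1..n} \<and> S \<noteq> {}}"
proof -
  have "{(v (insert 0 S) - v S) / real (card S) | S. S \<subseteq> {1..n} \<and> S \<noteq> {}} =
      (\<lambda>S. (v (insert 0 S) - v S) / real (card S)) ` {S. S \<subseteq> {1..n} \<and> S \<noteq> {}}"
    by auto
  then show ?thesis by simp
qed

lemma rs_beta_le:
  assumes "S \<subseteq> {1..n}" and "S \<noteq> {}"
  shows "real (card S) * rs_beta n v \<le> v (insert 0 S) - v S"
proof -
  have "rs_beta n v \<le> (v (insert 0 S) - v S) / real (card S)"
    unfolding rs_beta_def using assms
    by (intro Min_le[OF finite_rs_beta_candidates]) blast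
  moreover have "0 < card S"
    using assms finite_subset by (metis card_gt_0_iff finite_atLeastAtMost)
  ultimately show ?thesis
    by (simp add: pos_le_divide_eq mult.commute)
qed

lemma rs_beta_pos:
  assumes "1 \<le> n"
    and "\<And>S. S \<subseteq> {1..n} \<Longrightarrow> S \<noteq> {} \<Longrightarrow> v S < v (insert 0 S)"
  shows "0 < rs_beta n v"
proof -
  have "{(v (insert 0 S) - v S) / real (card S) | S. S \<subseteq> {1..n} \<and> S \<noteq> {}} \<noteq> {}"
    using assms(1) by (auto intro!: exI[of _ "{1}"])
  then have "rs_beta n v \<in> {(v (insert 0 S) - v S) / real (card S) | S. S \<subseteq> {1..n} \<and> S \<noteq> {}}"
    unfolding rs_beta_def by (intro Min_in[OF finite_rs_beta_candidates])
  then obtain S where S: "S \<subseteq> {1..n}" "S \<noteq> {}"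
    and beta_eq: "rs_beta n v = (v (insert 0 S) - v S) / real (card S)"
    by blast
  have "0 < card S"
    using S finite_subset by (metis card_gt_0_iff finite_atLeastAtMost)
  then show ?thesis
    using assms(2)[OF S] beta_eq by simp
qed

lemma sum_rs_xi_retailers:
  assumes "S \<subseteq> {1..n}"
  shows "(\<Sum>i\<in>S. rs_xi n v i) = (\<Sum>i\<in>S. v {0, i}) - real (card S) * rs_beta n v"
proof -
  have "(\<Sum>i\<in>S. rs_xi n v i) = (\<Sum>i\<in>S. v {0, i} - rs_beta n v)"
    using assms by (intro sum.cong) (auto simp: rs_xi_def)
  then show ?thesis by (simp add: sum_subtractf)
qed

lemma sum_rs_xi_with_supplier:
  assumes "S \<subseteq> {1..n}"
  shows "(\<Sum>i\<in>insert 0 S. rs_xi n v i) =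
    (\<Sum>i\<in>S. v {0, i}) + (real n - real (card S)) * rs_beta n v"
proof -
  have "0 \<notin> S" "finite S"
    using assms finite_subset by auto
  then show ?thesis
    using sum_rs_xi_retailers[OF assms] by (simp add: rs_xi_def algebra_simps)
qed

lemma rs_xi_in_core:
  assumes "1 \<le> n" and "v {} = 0"
    and additive: "\<And>S. S \<subseteq> {1..n} \<Longrightarrow> v (insert 0 S) = (\<Sum>i\<in>S. v {0, i})"
    and gain: "\<And>S. S \<subseteq> {1..n} \<Longrightarrow> S \<noteq> {} \<Longrightarrow> v S < v (insert 0 S)"
  shows "rs_xi n v \<in> core {0..n} v"
proof -
  have beta_pos: "0 < rs_beta n v"
    using assms(1) gain by (rule rs_beta_pos)
  have grand_coalition: "{0..n} = insert 0 {1..n}"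
    by auto
  have "(\<Sum>i\<in>{0..n}. rs_xi n v i) = v {0..n}"
    unfolding grand_coalition
    using sum_rs_xi_with_supplier[of "{1..n}"] additive[of "{1..n}"] by simp
  moreover have "v T \<le> (\<Sum>i\<in>T. rs_xi n v i)" if "T \<subset> {0..n}" for T
  proof -
    define S where "S = T - {0}"
    have S: "S \<subseteq> {1..n}"
      using that unfolding S_def by auto
    show ?thesis
    proof (cases "0 \<in> T")
      case True
      then have T: "T = insert 0 S"
        unfolding S_def by auto
      have "card S \<le> n"
        using card_mono[OF _ S] by simp
      then have "0 \<le> (real n - real (card S)) * rs_beta n v"
        using beta_pos by simp
      then show ?thesis
        unfolding T using sum_rs_xi_with_supplier[OF S] additive[OF S] by simp
    next
      case False
      then have T: "T = S"
        unfolding S_def by auto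
      show ?thesis
      proof (cases "S = {}")
        case True
        then show ?thesis unfolding T using assms(2) by simp
      next
        case False
        then show ?thesis
          unfolding T
          using sum_rs_xi_retailers[OF S, where v = v] rs_beta_le[OF S False, where v = v]
            additive[OF S]
          by linarith
      qed
    qed
  qed
  ultimately show ?thesis
    unfolding core_def by auto
qed

theorem lemma6p2:
  fixes n :: nat and c :: real and w :: "real \<Rightarrow> real" and P :: "nat \<Rightarrow> real \<Rightarrow> real"
    and qS :: "nat set \<Rightarrow> nat \<Rightarrow> real" and qc :: "nat \<Rightarrow> real"
  assumes "n \<ge> 1"
    and "rs_situation n c w P"
    and "\<And>S. S \<subseteq> {1..n} \<Longrightarrow> S \<noteq> {} \<Longrightarrow> coal_optimal w P S (qS S)"
    and "\<And>i. i \<in> {1..n} \<Longrightarrow> single_optimal c (P i) (qc i)"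
  shows "rs_xi n (rs_game c w P qS qc) \<in> core {0..n} (rs_game c w P qS qc)
       \<and> rs_xi n (rs_game c w P qS qc) 0 > 0"
proof -
  let ?v = "rs_game c w P qS qc"
  have gain: "?v S < ?v (insert 0 S)" if "S \<subseteq> {1..n}" "S \<noteq> {}" for S
    using assms(2) assms(3)[OF that] assms(4) that by (rule rs_game_supplier_gain)
  have additive: "?v (insert 0 S) = (\<Sum>i\<in>S. ?v {0, i})" if "S \<subseteq> {1..n}" for S
  proof -
    have "?v {0, i} = ret_profit P i (qc i) c" if "i \<in> S" for i
      using rs_game_insert_supplier[of "{i}"] \<open>S \<subseteq> {1..n}\<close> that by auto
    moreover have "0 \<notin> S" using that by auto
    ultimately show ?thesis
      by (simp add: rs_game_insert_supplier)
  qed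
  have "?v {} = 0"
    by (simp add: rs_game_def)
  with assms(1) additive gain have "rs_xi n ?v \<in> core {0..n} ?v"
    by (intro rs_xi_in_core)
  moreover have "0 < rs_beta n ?v"
    using assms(1) gain by (rule rs_beta_pos)
  ultimately show ?thesis
    using assms(1) by (simp add: rs_xi_def)
qed

end
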